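(* Let $p$ be an odd prime and let $r$ be an integer with $0 \leq r \leq \frac{p-1}{2}$. Then \[ \sum_{j=r}^{\frac{p-1}{2}} \binom{2j}{j}\binom{j}{r} 2^{p-1-2j} \equiv \begin{cases} 0 \pmod{p}, & \text{if } r < \frac{p-1}{2},\\ (-1)^{\frac{p-1}{2}} \pmod{p}, & \text{if } r = \frac{p-1}{2}. \end{cases} \] *)

theory Defs
  imports "HOL-Number_Theory.Number_Theory"
begin

end

theory Submission
  imports Defs
begin

text \<open>
  Put \<open>p = 2n + 1\<close>. Since \<open>4j + 2 \<equiv> -4(n - j)\<close> modulo \<open>p\<close>, the numbers
  \<open>binom(2j, j)\<close> and \<open>(-4)^j binom(n, j)\<close> obey the same recurrence
  \<open>(j + 1) x(j + 1) \<equiv> (4j + 2) x(j)\<close>, and \<open>j + 1\<close> is invertible for \<open>j < n\<close>, so they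
  are congruent for \<open>j \<le> n\<close>. As \<open>2^(p-1-2j) = 4^(n-j)\<close>, the sum becomes
  \<open>4^n \<Sum>j. (-1)^j binom(n, j) binom(j, r)\<close>, which the subset-of-a-subset identity and
  the alternating row sum of Pascal's triangle reduce to \<open>4^n (-1)^n\<close> if \<open>r = n\<close> and
  to \<open>0\<close> otherwise; finally \<open>4^n = 2^(p-1) \<equiv> 1\<close> by Fermat.
\<close>

lemma Suc_times_central_binomial_Suc:
  "Suc j * (2 * Suc j choose Suc j) = 2 * (2 * j + 1) * (2 * j choose j)"
  by (metis Suc_eq_plus1 Suc_times_binomial Suc_times_binomial_add
      add_2_eq_Suc add_mult_distrib mult_Suc_right nat_mult_1 one_add_one)

lemma Suc_times_binomial_Suc: "Suc k * (n choose Suc k) = (n - k) * (n choose k)"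
  by (metis binomial_absorption binomial_absorb_comp)

lemma central_binomial_cong:
  fixes p n j :: nat
  assumes "prime p" and p: "p = 2 * n + 1" and "j \<le> n"
  shows "[int (2 * j choose j) = (-4) ^ j * int (n choose j)] (mod int p)"
  using \<open>j \<le> n\<close>
proof (induction j)
  case 0
  then show ?case by simp
next
  case (Suc j)
  let ?a = "\<lambda>j. int (2 * j choose j)" and ?b = "\<lambda>j. (-4) ^ j * int (n choose j)"
  have "int (Suc j) * ?a (Suc j) = (4 * int j + 2) * ?a j"
    unfolding of_nat_mult[symmetric] Suc_times_central_binomial_Suc by (simp add: algebra_simps)
  also have "[\<dots> = (4 * int j + 2) * ?b j] (mod int p)"
    using Suc by (intro cong_mult cong_refl) simp
  also have "[(4 * int j + 2) * ?b j = (4 * int j - 4 * int n) * ?b j] (mod int p)"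
  proof (rule cong_mult[OF _ cong_refl])
    have "(4 * int j + 2) - (4 * int j - 4 * int n) = int p * 2"
      using p by simp
    then show "[4 * int j + 2 = 4 * int j - 4 * int n] (mod int p)"
      unfolding cong_iff_dvd_diff by simp
  qed
  also have "(4 * int j - 4 * int n) * ?b j = (-4) ^ Suc j * ((int n - int j) * int (n choose j))"
    by (simp add: algebra_simps)
  also have "(int n - int j) * int (n choose j) = int (Suc j) * int (n choose Suc j)"
    using arg_cong[OF Suc_times_binomial_Suc[of j n], of int] Suc.prems
    by (simp add: of_nat_diff algebra_simps)
  also have "(-4) ^ Suc j * (int (Suc j) * int (n choose Suc j)) = int (Suc j) * ?b (Suc j)"
    by (simp only: ac_simps)
  finally have "[int (Suc j) * ?a (Suc j) = int (Suc j) * ?b (Suc j)] (mod int p)" .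
  moreover have "\<not> p dvd Suc j"
    using Suc.prems p by (auto dest: dvd_imp_le)
  then have "coprime (int (Suc j)) (int p)"
    using prime_imp_coprime[OF \<open>prime p\<close>] coprime_commute coprime_int_iff by blast
  ultimately show ?case
    using cong_mult_lcancel by blast
qed

lemma alternating_sum_binomial_times_binomial:
  assumes "r \<le> n"
  shows "(\<Sum>j=r..n. (-1) ^ j * of_nat (n choose j) * of_nat (j choose r))
    = (if r = n then (-1) ^ r else (0 :: 'a :: comm_ring_1))"
proof -
  have "(\<Sum>j=r..n. (-1) ^ j * of_nat (n choose j) * of_nat (j choose r))
      = (\<Sum>k=0..n-r. (-1) ^ (r + k) * of_nat (n choose (r + k)) * of_nat ((r + k) choose r) :: 'a)"
    using assms by (intro sum.reindex_bij_witness[of _ "\<lambda>k. r + k" "\<lambda>j. j - r"]) auto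
  also have "\<dots> = (\<Sum>k=0..n-r. (-1) ^ r * of_nat (n choose r) * ((-1) ^ k * of_nat ((n - r) choose k)))"
  proof (intro sum.cong refl)
    fix k assume "k \<in> {0..n-r}"
    then have "(n choose (r + k)) * ((r + k) choose r) = (n choose r) * ((n - r) choose k)"
      using choose_mult[of r "r + k" n] assms by auto
    then have "of_nat (n choose (r + k)) * of_nat ((r + k) choose r)
        = (of_nat (n choose r) * of_nat ((n - r) choose k) :: 'a)"
      by (metis of_nat_mult)
    then show "(-1) ^ (r + k) * of_nat (n choose (r + k)) * of_nat ((r + k) choose r)
        = (-1) ^ r * of_nat (n choose r) * ((-1) ^ k * of_nat ((n - r) choose k) :: 'a)"
      by (simp add: power_add mult.assoc mult.left_commute)
  qed
  also have "\<dots> = (-1) ^ r * of_nat (n choose r) * (\<Sum>k\<le>n-r. (-1) ^ k * of_nat ((n - r) choose k))"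
    by (simp add: sum_distrib_left atLeast0AtMost)
  also have "\<dots> = (if r = n then (-1) ^ r else 0)"
    using assms choose_alternating_sum[of "n - r", where 'a='a] by auto
  finally show ?thesis .
qed

lemma four_power_cong_one:
  fixes p n :: nat
  assumes "prime p" and "p = 2 * n + 1"
  shows "[4 ^ n = 1] (mod int p)"
proof -
  have "2 < p"
    using prime_gt_1_nat[OF \<open>prime p\<close>] assms(2) by simp
  then have "\<not> p dvd 2"
    by (auto dest: dvd_imp_le)
  then have "[2 ^ (p - 1) = 1] (mod p)"
    using fermat_theorem[OF \<open>prime p\<close>] by blast
  then have "[int (2 ^ (p - 1)) = int 1] (mod int p)"
    by (simp only: cong_int_iff)
  then show ?thesis
    using assms(2) by (simp add: power_mult)
qed

theorem theorem4p2:
  fixes p r :: nat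
  assumes "prime p" and "odd p" and "r \<le> (p - 1) div 2"
  shows "[(\<Sum>j=r..(p - 1) div 2. int ((2*j) choose j) * int (j choose r) * 2 ^ (p - 1 - 2*j))
          = (if r < (p - 1) div 2 then 0 else (-1) ^ ((p - 1) div 2))] (mod int p)"
proof -
  define n where "n = (p - 1) div 2"
  have p: "p = 2 * n + 1" and "r \<le> n"
    using assms unfolding n_def by presburger+
  have "[(\<Sum>j=r..n. int ((2*j) choose j) * int (j choose r) * 2 ^ (p - 1 - 2*j))
      = (\<Sum>j=r..n. (-4) ^ j * int (n choose j) * int (j choose r) * 4 ^ (n - j))] (mod int p)"
    using central_binomial_cong[OF \<open>prime p\<close> p] p
    by (intro cong_sum cong_mult cong_refl) (auto simp: power_mult simp flip: diff_mult_distrib2)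
  also have "(\<Sum>j=r..n. (-4) ^ j * int (n choose j) * int (j choose r) * 4 ^ (n - j))
      = 4 ^ n * (\<Sum>j=r..n. (-1) ^ j * int (n choose j) * int (j choose r))"
    unfolding sum_distrib_left
  proof (intro sum.cong refl)
    fix j assume "j \<in> {r..n}"
    then have "(-4 :: int) ^ j * 4 ^ (n - j) = (-1) ^ j * 4 ^ n"
      by (simp add: power_minus[of 4] flip: power_add)
    then show "(-4) ^ j * int (n choose j) * int (j choose r) * 4 ^ (n - j)
        = 4 ^ n * ((-1) ^ j * int (n choose j) * int (j choose r))"
      by (metis (no_types, lifting) mult.assoc mult.commute mult.left_commute)
  qed
  also have "\<dots> = 4 ^ n * (if r = n then (-1) ^ n else 0)"
    using alternating_sum_binomial_times_binomial[OF \<open>r \<le> n\<close>, where 'a=int] by auto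
  also have "[\<dots> = 1 * (if r = n then (-1) ^ n else 0)] (mod int p)"
    by (intro cong_mult cong_refl four_power_cong_one[OF \<open>prime p\<close> p])
  finally show ?thesis
    using \<open>r \<le> n\<close> unfolding n_def [symmetric] by auto
qed

end
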